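(* Let $G$ be a graph containing a $2$-factor, and let $F$ be a $2$-factor of $G$ whose number of components is minimum among all $2$-factors of $G$. Let $x\in V(G)$ be such that there exists a $2$-factor $F'$ of $G-x$ with $\omega(F')<\omega(F)$ (such $x$ is called co-absorbable). Then $d_G(x)\le \alpha(G)-1$.
   Context: All graphs are finite, simple and undirected. A $2$-factor of a graph is a spanning subgraph in which every vertex has degree $2$ (equivalently, every component is a cycle). $\omega(H)$ denotes the number of connected components of $H$, $d_G(x)$ the degree of $x$ in $G$, and $\alpha(G)$ the independence number of $G$. *)

theory Defs
  imports Main
begin

definition simple_graph :: "'a set \<Rightarrow> 'a set set \<Rightarrow> bool" where
  "simple_graph V E \<longleftrightarrow> finite V \<and> (\<forall>e\<in>E. \<exists>u v. e = {u, v} \<and> u \<noteq> v \<and> u \<in> V \<and> v \<in> V)"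

definition degree :: "'a set set \<Rightarrow> 'a \<Rightarrow> nat" where
  "degree E x = card {e \<in> E. x \<in> e}"

definition two_factor :: "'a set \<Rightarrow> 'a set set \<Rightarrow> 'a set set \<Rightarrow> bool" where
  "two_factor V E F \<longleftrightarrow> F \<subseteq> E \<and> (\<forall>v\<in>V. degree F v = 2)"

definition reach :: "'a set set \<Rightarrow> 'a \<Rightarrow> 'a \<Rightarrow> bool" where
  "reach F = (\<lambda>u v. {u, v} \<in> F)\<^sup>*\<^sup>*"

definition num_components :: "'a set \<Rightarrow> 'a set set \<Rightarrow> nat" where
  "num_components V F = card {{w \<in> V. reach F v w} | v. v \<in> V}"

definition independent :: "'a set \<Rightarrow> 'a set set \<Rightarrow> 'a set \<Rightarrow> bool" where
  "independent V E S \<longleftrightarrow> S \<subseteq> V \<and> (\<forall>u\<in>S. \<forall>v\<in>S. {u, v} \<notin> E)"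

definition alpha :: "'a set \<Rightarrow> 'a set set \<Rightarrow> nat" where
  "alpha V E = Max {card S | S. independent V E S}"

definition del_edges :: "'a set set \<Rightarrow> 'a \<Rightarrow> 'a set set" where
  "del_edges E x = {e \<in> E. x \<notin> e}"

end

(*
  Orient every cycle of the 2-factor F' of G - x and write y+ for the successor of y. For
  distinct neighbours y, y' of x, neither x y+ nor y+ y'+ is an edge of G: otherwise
  replacing y y+ by the path y x y+, respectively y y+ and y' y'+ by y x y' and y+ y'+,
  turns F' into a 2-factor of G. The orientation guarantees that every cycle of F' stays
  connected in it, so it has at most omega(F') < omega(F) components, contradicting the
  minimality of F. Hence x together with the successors of its neighbours is an independent
  set of size d(x) + 1.
*)
theory Submission
  imports Defs
begin

section \<open>Edges, neighbours and degrees\<close>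

definition neighbours :: "'a set set \<Rightarrow> 'a \<Rightarrow> 'a set" where
  "neighbours H v = {u. {v, u} \<in> H}"

definition graph_on :: "'a set \<Rightarrow> 'a set set \<Rightarrow> bool" where
  "graph_on W H \<longleftrightarrow> (\<forall>e\<in>H. \<exists>u v. e = {u, v} \<and> u \<noteq> v \<and> u \<in> W \<and> v \<in> W)"

lemma simple_graph_iff: "simple_graph V E \<longleftrightarrow> finite V \<and> graph_on V E"
  unfolding simple_graph_def graph_on_def ..

lemma graph_on_edgeD:
  "graph_on W H \<Longrightarrow> {u, v} \<in> H \<Longrightarrow> u \<in> W \<and> v \<in> W \<and> u \<noteq> v"
  unfolding graph_on_def by (fastforce simp: doubleton_eq_iff)

lemma graph_on_no_loop: "graph_on W H \<Longrightarrow> {u} \<notin> H"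
  unfolding graph_on_def by (auto simp: doubleton_eq_iff)

lemma graph_on_finite: "graph_on W H \<Longrightarrow> finite W \<Longrightarrow> finite H"
  unfolding graph_on_def by (rule finite_subset[of _ "Pow W"]) auto

lemma card_le_alpha:
  assumes "finite V" "independent V E S"
  shows "card S \<le> alpha V E"
proof -
  have "{card S | S. independent V E S} \<subseteq> {..card V}"
    using assms(1) unfolding independent_def by (auto intro: card_mono)
  then have "finite {card S | S. independent V E S}" by (rule finite_subset) simp
  then show ?thesis unfolding alpha_def using assms(2) by (auto intro: Max_ge)
qed

lemma degree_eq_card_neighbours:
  assumes "graph_on W H" shows "degree H v = card (neighbours H v)"
proof -
  have "{e \<in> H. v \<in> e} = (\<lambda>u. {v, u}) ` neighbours H v"
    using assms unfolding graph_on_def neighbours_def by (fastforce simp: insert_commute)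
  moreover have "inj_on (\<lambda>u. {v, u}) (neighbours H v)"
    by (auto simp: inj_on_def doubleton_eq_iff)
  ultimately show ?thesis unfolding degree_def by (simp add: card_image)
qed

lemma doubleton_eq_if_card_2: "card N = 2 \<Longrightarrow> p \<in> N \<Longrightarrow> q \<in> N \<Longrightarrow> p \<noteq> q \<Longrightarrow> N = {p, q}"
  unfolding card_2_iff by auto

lemma degree_empty [simp]: "degree {} v = 0"
  unfolding degree_def by simp

lemma degree_insert:
  "finite H \<Longrightarrow> degree (insert e H) v = (if v \<in> e \<and> e \<notin> H then 1 else 0) + degree H v"
proof -
  assume "finite H"
  moreover have "{e' \<in> insert e H. v \<in> e'} =
      (if v \<in> e then insert e {e' \<in> H. v \<in> e'} else {e' \<in> H. v \<in> e'})"
    by auto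
  ultimately show ?thesis unfolding degree_def by (auto simp: card_insert_if)
qed

lemma degree_switch:
  assumes "R \<subseteq> H" "A \<inter> H \<subseteq> R" "finite H" "finite A"
  shows "degree ((H - R) \<union> A) v + degree R v = degree H v + degree A v"
proof -
  let ?at = "\<lambda>H. {e \<in> H. v \<in> e}"
  have at_R: "?at R \<subseteq> ?at H" using assms(1) by auto
  have fin: "finite (?at H)" "finite (?at A)" using assms(3,4) by auto
  have "?at ((H - R) \<union> A) = (?at H - ?at R) \<union> ?at A" by auto
  moreover have "(?at H - ?at R) \<inter> ?at A = {}" using assms(2) by auto
  ultimately have "card (?at ((H - R) \<union> A)) = card (?at H - ?at R) + card (?at A)"
    using fin by (simp add: card_Un_disjoint)
  moreover have "card (?at H - ?at R) + card (?at R) = card (?at H)"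
    using card_Diff_subset[OF finite_subset[OF at_R fin(1)] at_R] card_mono[OF fin(1) at_R]
    by simp
  ultimately show ?thesis unfolding degree_def by simp
qed

lemma graph_on_two_factor_del:
  assumes "graph_on V E" "two_factor (V - {x}) (del_edges E x) F"
  shows "graph_on (V - {x}) F"
  unfolding graph_on_def
proof
  fix e assume "e \<in> F"
  then have "e \<in> E" "x \<notin> e" using assms(2) unfolding two_factor_def del_edges_def by auto
  then show "\<exists>u v. e = {u, v} \<and> u \<noteq> v \<and> u \<in> V - {x} \<and> v \<in> V - {x}"
    using assms(1) unfolding graph_on_def by fastforce
qed

lemma two_factor_two_regular:
  "graph_on W F \<Longrightarrow> two_factor W E F \<Longrightarrow> \<forall>v\<in>W. card (neighbours F v) = 2"
  unfolding two_factor_def by (simp add: degree_eq_card_neighbours)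

lemma two_factor_switch:
  assumes F': "two_factor (V - {x}) (del_edges E x) F'" "finite F'"
    and R: "R \<subseteq> F'" and A: "A \<subseteq> E" "A \<inter> F' \<subseteq> R" "finite A"
    and deg_A: "degree A x = 2" "\<forall>v\<in>V - {x}. degree A v = degree R v"
  shows "two_factor V E ((F' - R) \<union> A)"
  unfolding two_factor_def
proof (intro conjI ballI)
  show "(F' - R) \<union> A \<subseteq> E"
    using F'(1) A(1) unfolding two_factor_def del_edges_def by blast
next
  fix v assume "v \<in> V"
  have switch: "degree ((F' - R) \<union> A) v + degree R v = degree F' v + degree A v"
    using degree_switch[OF R A(2) F'(2) A(3)] .
  show "degree ((F' - R) \<union> A) v = 2"
  proof (cases "v = x")
    case True
    have "{e \<in> F'. x \<in> e} = {}" "{e \<in> R. x \<in> e} = {}"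
      using F'(1) R unfolding two_factor_def del_edges_def by auto
    then have "degree F' x = 0" "degree R x = 0" by (metis card.empty degree_def)+
    then show ?thesis using switch deg_A(1) True by simp
  next
    case False
    then show ?thesis
      using switch deg_A(2) F'(1) \<open>v \<in> V\<close> unfolding two_factor_def by simp
  qed
qed

section \<open>Orientations of 2-regular graphs\<close>

text \<open>s is the successor map of an orientation of the cycles of H; the condition
  s (s v) \<noteq> v excludes traversing an edge back and forth.\<close>
definition orientation :: "'a set \<Rightarrow> 'a set set \<Rightarrow> ('a \<Rightarrow> 'a) \<Rightarrow> bool" where
  "orientation W H s \<longleftrightarrow> inj_on s W \<and> s ` W \<subseteq> W \<and> (\<forall>v\<in>W. {v, s v} \<in> H \<and> s (s v) \<noteq> v)"

lemma orientation_add_triangle: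
  assumes "orientation W H s" "v \<notin> W" "a \<notin> W" "b \<notin> W" "distinct [v, a, b]"
  shows "orientation (W \<union> {v, a, b}) (H \<union> {{v, a}, {a, b}, {b, v}}) (s(v := a, a := b, b := v))"
  using assms unfolding orientation_def inj_on_def by (auto simp: insert_commute)

lemma orientation_subdivide:
  assumes s: "orientation W H s" and v: "v \<notin> W" and a: "a \<in> W" "s a = b"
  shows "orientation (insert v W) ((H - {{a, b}}) \<union> {{a, v}, {v, b}}) (s(a := v, v := b))"
proof -
  have inj: "inj_on s W" using s unfolding orientation_def by blast
  have s_W: "s u \<in> W" "{u, s u} \<in> H" "s (s u) \<noteq> u" if "u \<in> W" for u
    using s that unfolding orientation_def by auto
  have b_W: "b \<in> W" "s b \<noteq> a" using s_W(1,3)[OF a(1)] a(2) by auto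
  then have "b \<noteq> a" using a(2) by auto
  have not_b: "s u \<noteq> b" if "u \<in> W" "u \<noteq> a" for u
    using inj that a inj_on_def by metis
  show ?thesis
    unfolding orientation_def
  proof (intro conjI ballI)
    have "inj_on (s(a := v)) W"
      using inj s_W(1) v by (intro inj_on_fun_updI) auto
    moreover have "inj_on (s(a := v, v := b)) W = inj_on (s(a := v)) W"
      using v by (intro inj_on_cong) auto
    ultimately have "inj_on (s(a := v, v := b)) W" by simp
    moreover have "(s(a := v, v := b)) ` W = (s(a := v)) ` W"
      using v by (intro image_cong) auto
    moreover have "b \<notin> (s(a := v)) ` W"
      using not_b v b_W(1) by auto
    moreover have "W - {v} = W" using v by blast
    ultimately show "inj_on (s(a := v, v := b)) (insert v W)"
      by simp
    show "(s(a := v, v := b)) ` insert v W \<subseteq> insert v W"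
      using s_W(1) b_W(1) by auto
  next
    fix u assume u: "u \<in> insert v W"
    have "{u, s u} \<noteq> {a, b}" if "u \<in> W" "u \<noteq> a"
      using that not_b b_W(2) by (auto simp: doubleton_eq_iff)
    then show "{u, (s(a := v, v := b)) u} \<in> (H - {{a, b}}) \<union> {{a, v}, {v, b}}"
      using u s_W(2) v by auto
    have "b \<noteq> v" using b_W(1) v by blast
    consider "u = v" | "u = a" | "u \<in> W" "u \<noteq> a" "s u = a" | "u \<in> W" "u \<noteq> a" "s u \<noteq> a"
      using u by blast
    then show "(s(a := v, v := b)) ((s(a := v, v := b)) u) \<noteq> u"
    proof cases
      case 1
      then show ?thesis using s_W(1)[OF b_W(1)] v \<open>b \<noteq> a\<close> \<open>b \<noteq> v\<close> by auto
    next
      case 2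
      then show ?thesis using a(1) v \<open>b \<noteq> a\<close> by auto
    next
      case 3
      then show ?thesis using a(1) v by auto
    next
      case 4
      then show ?thesis using s_W(1,3) v by auto
    qed
  qed
qed

lemma orientation_image: "orientation W H s \<Longrightarrow> finite W \<Longrightarrow> s ` W = W"
  unfolding orientation_def by (simp add: endo_inj_surj)

text \<open>In a 2-regular graph the two neighbours of a are its successor and its predecessor,
  so every edge is traversed by an orientation in one direction.\<close>
lemma orientation_covers_edge:
  assumes s: "orientation W H s" and "finite W" "graph_on W H"
    and two_reg: "\<forall>v\<in>W. card (neighbours H v) = 2" and ab: "{a, b} \<in> H"
  shows "b = s a \<or> a = s b"
proof -
  have "a \<in> W" using graph_on_edgeD[OF assms(3) ab] by blast
  then obtain p where p: "p \<in> W" "s p = a" using orientation_image[OF s assms(2)] by force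
  have "{a, s a} \<in> H" "{p, a} \<in> H" "s (s p) \<noteq> p"
    using s p \<open>a \<in> W\<close> unfolding orientation_def by auto
  then have "s a \<in> neighbours H a" "p \<in> neighbours H a" "s a \<noteq> p"
    using p(2) unfolding neighbours_def by (auto simp: insert_commute)
  then have "neighbours H a = {s a, p}"
    using doubleton_eq_if_card_2 two_reg \<open>a \<in> W\<close> by metis
  moreover have "b \<in> neighbours H a" using ab unfolding neighbours_def by simp
  ultimately show ?thesis using p(2) by blast
qed

lemma two_regular_remove_triangle:
  assumes H: "graph_on W H" and two_reg: "\<forall>u\<in>W. card (neighbours H u) = 2"
    and v: "v \<in> W" "neighbours H v = {a, b}" and ab: "{a, b} \<in> H"
  defines "T \<equiv> {v, a, b}" and "H' \<equiv> H - {{v, a}, {a, b}, {b, v}}"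
  shows "graph_on (W - T) H'" "\<forall>u\<in>W - T. card (neighbours H' u) = 2"
proof -
  have va: "{v, a} \<in> H" "{v, b} \<in> H" using v(2) unfolding neighbours_def by auto
  have abW: "a \<in> W" "b \<in> W" "a \<noteq> b" "a \<noteq> v" "b \<noteq> v"
    using graph_on_edgeD[OF H] va ab by blast+
  have nb: "v \<in> neighbours H a" "b \<in> neighbours H a" "v \<in> neighbours H b" "a \<in> neighbours H b"
    using va ab unfolding neighbours_def by (auto simp: insert_commute)
  have "neighbours H a = {v, b}"
    by (rule doubleton_eq_if_card_2) (use nb two_reg abW in auto)
  moreover have "neighbours H b = {v, a}"
    by (rule doubleton_eq_if_card_2) (use nb two_reg abW in auto)
  ultimately have closed: "neighbours H u \<subseteq> T" if "u \<in> T" for u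
    using that v(2) unfolding T_def by auto
  show "graph_on (W - T) H'"
    unfolding graph_on_def
  proof
    fix e assume "e \<in> H'"
    then have e_H: "e \<in> H" "e \<notin> {{v, a}, {a, b}, {b, v}}" unfolding H'_def by blast+
    then obtain p q where e: "e = {p, q}" "p \<noteq> q" "p \<in> W" "q \<in> W"
      using H unfolding graph_on_def by meson
    have "q \<in> neighbours H p" "p \<in> neighbours H q"
      using e(1) e_H(1) unfolding neighbours_def by (auto simp: insert_commute)
    then have "p \<in> T \<longleftrightarrow> q \<in> T" using closed by blast
    moreover have "p \<notin> T \<or> q \<notin> T" using e(1,2) e_H(2) unfolding T_def by auto
    ultimately show "\<exists>u w. e = {u, w} \<and> u \<noteq> w \<and> u \<in> W - T \<and> w \<in> W - T" using e by blast
  qed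
  have "neighbours H' u = neighbours H u" if "u \<notin> T" for u
    using that unfolding H'_def T_def neighbours_def by auto
  then show "\<forall>u\<in>W - T. card (neighbours H' u) = 2" using two_reg by simp
qed

lemma two_regular_suppress_vertex:
  assumes H: "graph_on W H" and two_reg: "\<forall>u\<in>W. card (neighbours H u) = 2"
    and v: "v \<in> W" "neighbours H v = {a, b}" "a \<noteq> b" and ab: "{a, b} \<notin> H"
  defines "H' \<equiv> (H - {{v, a}, {v, b}}) \<union> {{a, b}}"
  shows "graph_on (W - {v}) H'" "\<forall>u\<in>W - {v}. card (neighbours H' u) = 2"
proof -
  have va: "{v, a} \<in> H" "{v, b} \<in> H" using v(2) unfolding neighbours_def by auto
  have abW: "a \<in> W" "b \<in> W" "a \<noteq> v" "b \<noteq> v"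
    using graph_on_edgeD[OF H] va by blast+
  show "graph_on (W - {v}) H'"
    unfolding graph_on_def
  proof
    fix e assume "e \<in> H'"
    then consider "e = {a, b}" | "e \<in> H" "e \<noteq> {v, a}" "e \<noteq> {v, b}"
      unfolding H'_def by blast
    then show "\<exists>u w. e = {u, w} \<and> u \<noteq> w \<and> u \<in> W - {v} \<and> w \<in> W - {v}"
    proof cases
      case 2
      then obtain p q where e: "e = {p, q}" "p \<noteq> q" "p \<in> W" "q \<in> W"
        using H unfolding graph_on_def by meson
      have "q \<in> neighbours H p" "p \<in> neighbours H q"
        using e(1) 2(1) unfolding neighbours_def by (auto simp: insert_commute)
      then have "p \<noteq> v" "q \<noteq> v"
        using v(2) e(1) 2(2,3) by (auto simp: insert_commute)
      then show ?thesis using e by blast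
    qed (use abW v(3) in blast)
  qed
  show "\<forall>u\<in>W - {v}. card (neighbours H' u) = 2"
  proof
    fix u assume u: "u \<in> W - {v}"
    have "neighbours H' u = insert b (neighbours H u - {v})" if "u = a"
      using that abW unfolding H'_def neighbours_def by (auto simp: doubleton_eq_iff)
    moreover have "neighbours H' u = insert a (neighbours H u - {v})" if "u = b"
      using that abW unfolding H'_def neighbours_def by (auto simp: doubleton_eq_iff)
    moreover have "neighbours H' u = neighbours H u" if "u \<noteq> a" "u \<noteq> b"
      using that u unfolding H'_def neighbours_def by (auto simp: doubleton_eq_iff)
    moreover have "v \<in> neighbours H a" "v \<in> neighbours H b" "b \<notin> neighbours H a" "a \<notin> neighbours H b"
      using va ab unfolding neighbours_def by (auto simp: insert_commute)
    moreover have "finite (neighbours H u)" using two_reg u by (simp add: card_ge_0_finite)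
    ultimately show "card (neighbours H' u) = 2"
      using two_reg u abW by (cases "u = a \<or> u = b") (auto simp: card_insert_if)
  qed
qed

lemma orientation_exists:
  assumes "finite W" "graph_on W H" "\<forall>v\<in>W. card (neighbours H v) = 2"
  shows "\<exists>s. orientation W H s"
  using assms
proof (induction "card W" arbitrary: W H rule: less_induct)
  case less
  note H = less.prems(2) and two_reg = less.prems(3)
  show ?case
  proof (cases "W = {}")
    case True
    then show ?thesis unfolding orientation_def by simp
  next
    case False
    then obtain v where v: "v \<in> W" by blast
    then obtain a b where ab: "neighbours H v = {a, b}" "a \<noteq> b"
      using two_reg card_2_iff by metis
    have va: "{v, a} \<in> H" "{v, b} \<in> H" using ab(1) unfolding neighbours_def by auto
    have abW: "a \<in> W" "b \<in> W" "a \<noteq> v" "b \<noteq> v"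
      using graph_on_edgeD[OF H] va by blast+
    show ?thesis
    proof (cases "{a, b} \<in> H")
      case True
      let ?T = "{v, a, b}" and ?H' = "H - {{v, a}, {a, b}, {b, v}}"
      have "card (W - ?T) < card W"
        using less.prems(1) v by (intro psubset_card_mono) auto
      then obtain s where "orientation (W - ?T) ?H' s"
        using less.hyps less.prems(1) two_regular_remove_triangle[OF H two_reg v ab(1) True]
        by blast
      then have "orientation ((W - ?T) \<union> ?T) (?H' \<union> {{v, a}, {a, b}, {b, v}})
          (s(v := a, a := b, b := v))"
        using abW ab(2) by (intro orientation_add_triangle) auto
      moreover have "(W - ?T) \<union> ?T = W" using v abW by blast
      moreover have "?H' \<union> {{v, a}, {a, b}, {b, v}} = H" using va True by (auto simp: insert_commute)
      ultimately show ?thesis by auto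
    next
      case False
      let ?H' = "(H - {{v, a}, {v, b}}) \<union> {{a, b}}"
      note H' = two_regular_suppress_vertex[OF H two_reg v ab False]
      have "card (W - {v}) < card W"
        using less.prems(1) v by (intro psubset_card_mono) auto
      then obtain s where s: "orientation (W - {v}) ?H' s"
        using less.hyps less.prems(1) H' by blast
      have "b = s a \<or> a = s b"
        using orientation_covers_edge[OF s _ H'] less.prems(1) by blast
      then obtain a' b' where a'b': "{a', b'} = {a, b}" "s a' = b'" by (auto simp: insert_commute)
      have "a' \<in> W - {v}" using a'b'(1) abW by (auto simp: doubleton_eq_iff)
      then have "orientation (insert v (W - {v})) ((?H' - {{a', b'}}) \<union> {{a', v}, {v, b'}})
          (s(a' := v, v := b'))"
        using s a'b'(2) by (intro orientation_subdivide) auto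
      moreover have "insert v (W - {v}) = W" using v by blast
      moreover have "(?H' - {{a', b'}}) \<union> {{a', v}, {v, b'}} = H"
        using va False a'b'(1) by (auto simp: insert_commute doubleton_eq_iff)
      ultimately show ?thesis by auto
    qed
  qed
qed

section \<open>Connected components\<close>

lemma reach_refl [simp]: "reach F u u"
  unfolding reach_def by simp

lemma reach_edge: "{u, v} \<in> F \<Longrightarrow> reach F u v"
  unfolding reach_def by auto

lemma reach_trans: "reach F u v \<Longrightarrow> reach F v w \<Longrightarrow> reach F u w"
  unfolding reach_def by (rule rtranclp_trans)

lemma reach_sym: "reach F u v \<Longrightarrow> reach F v u"
proof -
  have "symp (\<lambda>u v. {u, v} \<in> F)" by (auto intro: sympI simp: insert_commute)
  then show "reach F u v \<Longrightarrow> reach F v u" unfolding reach_def by (metis symp_rtranclp sympD)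
qed

lemma reach_mono:
  assumes "\<And>a b. {a, b} \<in> F1 \<Longrightarrow> reach F2 a b" and "reach F1 u v"
  shows "reach F2 u v"
proof -
  have "reach F1 \<le> (reach F2)\<^sup>*\<^sup>*"
    unfolding reach_def[of F1] using assms(1) by (intro rtranclp_mono) auto
  then show ?thesis using assms(2) unfolding reach_def by auto
qed

definition component :: "'a set \<Rightarrow> 'a set set \<Rightarrow> 'a \<Rightarrow> 'a set" where
  "component V F v = {w \<in> V. reach F v w}"

lemma num_components_eq_card_image: "num_components V F = card (component V F ` V)"
  unfolding num_components_def component_def by (simp add: Setcompr_eq_image)

lemma component_eq: "reach F u w \<Longrightarrow> component V F u = component V F w"
  unfolding component_def by (blast intro: reach_trans reach_sym)

lemma num_components_le:
  assumes "finite W" "W \<subseteq> V"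
    and to_W: "\<forall>v\<in>V. \<exists>w\<in>W. reach F2 v w"
    and lift: "\<And>u w. u \<in> W \<Longrightarrow> w \<in> W \<Longrightarrow> reach F1 u w \<Longrightarrow> reach F2 u w"
  shows "num_components V F2 \<le> num_components W F1"
proof -
  have "component V F2 ` V = component V F2 ` W"
    using assms(2) to_W component_eq by (fastforce simp: image_iff)
  also have "\<dots> = (\<lambda>K. \<Union> (component V F2 ` K)) ` component W F1 ` W"
  proof -
    have "component V F2 w = \<Union> (component V F2 ` component W F1 w)" if "w \<in> W" for w
      using that lift component_eq unfolding component_def[of W F1] by fastforce
    then show ?thesis by (simp add: image_image)
  qed
  finally show ?thesis
    unfolding num_components_eq_card_image by (metis card_image_le finite_imageI assms(1))
qed

text \<open>The vertices of W not connected to T are closed under the injection s, hence permuted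
  by it; so the successor of a vertex of T cannot be among them.\<close>
lemma reach_from_successor:
  assumes "finite W" "inj_on s W" "s ` W \<subseteq> W" "T \<subseteq> W" "t \<in> T"
    and step: "\<And>w. w \<in> W - T \<Longrightarrow> reach F w (s w)"
  shows "\<exists>t'\<in>T. reach F (s t) t'"
proof (rule ccontr)
  assume not_T: "\<not> (\<exists>t'\<in>T. reach F (s t) t')"
  define U where "U = {u \<in> W. \<not> (\<exists>t'\<in>T. reach F u t')}"
  have "s ` U \<subseteq> U"
  proof
    fix u assume "u \<in> s ` U"
    then obtain w where w: "w \<in> U" "u = s w" by blast
    then have "w \<in> W - T" unfolding U_def by auto
    then have "u \<in> W" "reach F w u" using w(2) step assms(3) by auto
    then show "u \<in> U"
      using w(1) reach_trans[OF \<open>reach F w u\<close>] unfolding U_def by blast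
  qed
  then have "s ` U = U"
    using assms(1,2) unfolding U_def by (intro endo_inj_surj) (auto intro: inj_on_subset)
  moreover have "s t \<in> U" using not_T assms(3-5) unfolding U_def by blast
  ultimately obtain u where "u \<in> U" "s u = s t" by (metis imageE)
  then have "u = t" using assms(2,4,5) unfolding U_def by (auto dest: inj_onD)
  then show False using \<open>u \<in> U\<close> assms(5) unfolding U_def by auto
qed

lemma num_components_switch_le:
  assumes W: "finite W" "W \<subseteq> V" and F': "graph_on W F'" and s_W: "inj_on s W" "s ` W \<subseteq> W"
    and covers: "\<And>a b. {a, b} \<in> F' \<Longrightarrow> b = s a \<or> a = s b"
    and T: "T \<subseteq> W" "\<forall>t\<in>T. \<forall>t'\<in>T. reach F2 t t'"
    and kept: "\<forall>w\<in>W - T. {w, s w} \<in> F2"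
    and to_W: "\<forall>v\<in>V. \<exists>w\<in>W. reach F2 v w"
  shows "num_components V F2 \<le> num_components W F'"
proof -
  have step: "reach F2 w (s w)" if "w \<in> W" for w
  proof (cases "w \<in> T")
    case True
    have "reach F2 u (s u)" if "u \<in> W - T" for u
      using kept that by (blast intro: reach_edge)
    then obtain t' where "t' \<in> T" "reach F2 (s w) t'"
      using reach_from_successor[OF W(1) s_W T(1) True] by blast
    moreover have "reach F2 w t'" using T(2) True \<open>t' \<in> T\<close> by blast
    ultimately show ?thesis using reach_sym reach_trans by metis
  next
    case False
    then show ?thesis using kept that by (blast intro: reach_edge)
  qed
  have "reach F2 a b" if "{a, b} \<in> F'" for a b
    using covers[OF that] graph_on_edgeD[OF F' that] step reach_sym by metis
  then show ?thesis
    using num_components_le[OF W to_W] reach_mono by metis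
qed

section \<open>Switching a 2-factor of G - x into one of G\<close>

context
  fixes V E x F' s
  assumes graph: "simple_graph V E" and x: "x \<in> V"
    and F': "two_factor (V - {x}) (del_edges E x) F'"
    and s: "orientation (V - {x}) F' s"
    and F'_fewer: "\<forall>F2. two_factor V E F2 \<longrightarrow> num_components (V - {x}) F' < num_components V F2"
begin

private lemma E_graph_on: "graph_on V E"
  using graph unfolding simple_graph_iff by simp

private lemma finite_V_minus_x: "finite (V - {x})"
  using graph unfolding simple_graph_def by simp

private lemma F'_graph_on: "graph_on (V - {x}) F'"
  using graph_on_two_factor_del[OF _ F'] graph unfolding simple_graph_iff by simp

private lemma finite_F': "finite F'"
  by (rule graph_on_finite[OF F'_graph_on finite_V_minus_x])

private lemma F'_edges: "F' \<subseteq> E" "e \<in> F' \<Longrightarrow> x \<notin> e"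
  using F' unfolding two_factor_def del_edges_def by auto

private lemma successor:
  assumes "y \<in> V - {x}"
  shows "s y \<in> V - {x}" "{y, s y} \<in> F'" "s (s y) \<noteq> y" "s y \<noteq> y"
proof -
  show "s y \<in> V - {x}" "{y, s y} \<in> F'" "s (s y) \<noteq> y"
    using s assms unfolding orientation_def by auto
  then show "s y \<noteq> y" using graph_on_edgeD[OF F'_graph_on] by metis
qed

private lemma inj_successor: "inj_on s (V - {x})"
  using s unfolding orientation_def by blast

private lemma successor_image: "s ` (V - {x}) \<subseteq> V - {x}"
  by (rule image_subsetI) (rule successor(1))

private lemma neighbour_of_x: "{x, y} \<in> E \<Longrightarrow> y \<in> V - {x}"
  using graph graph_on_edgeD unfolding simple_graph_iff by fastforce

private lemma F'_covered: "{a, b} \<in> F' \<Longrightarrow> b = s a \<or> a = s b"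
  using orientation_covers_edge[OF s finite_V_minus_x F'_graph_on]
    two_factor_two_regular[OF F'_graph_on F'] by blast

private lemma adjacent_successors_in_F':
  assumes "y1 \<in> V - {x}" "y2 \<in> V - {x}" "{s y1, s y2} \<in> F'"
  shows "s y1 = y2 \<or> s y2 = y1"
proof -
  have "s y2 = s (s y1) \<or> s y1 = s (s y2)" using F'_covered[OF assms(3)] .
  then show ?thesis using inj_onD[OF inj_successor] assms(1,2) successor(1) by metis
qed

text \<open>This is where the minimality of F enters.\<close>
private lemma switch_not_two_factor:
  assumes "two_factor V E F2" "T \<subseteq> V - {x}" "t \<in> T" "{x, t} \<in> F2"
    and "\<forall>u\<in>T. \<forall>u'\<in>T. reach F2 u u'" "\<forall>w\<in>V - {x} - T. {w, s w} \<in> F2"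
  shows False
proof -
  have to_W: "\<forall>v\<in>V. \<exists>w\<in>V - {x}. reach F2 v w"
  proof
    fix v assume "v \<in> V"
    show "\<exists>w\<in>V - {x}. reach F2 v w"
    proof (cases "v = x")
      case True
      have "t \<in> V - {x}" using assms(2,3) by blast
      then show ?thesis using reach_edge[OF assms(4)] True by blast
    next
      case False
      then have "v \<in> V - {x}" using \<open>v \<in> V\<close> by blast
      then show ?thesis by (intro bexI[of _ v]) simp_all
    qed
  qed
  have "num_components V F2 \<le> num_components (V - {x}) F'"
    by (rule num_components_switch_le[OF finite_V_minus_x Diff_subset F'_graph_on
          inj_successor successor_image F'_covered assms(2,5,6) to_W])
  moreover have "num_components (V - {x}) F' < num_components V F2"
    using F'_fewer assms(1) by blast
  ultimately show False by simp
qed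

lemma successor_not_adjacent:
  assumes xy: "{x, y} \<in> E"
  shows "{x, s y} \<notin> E"
proof
  assume xz: "{x, s y} \<in> E"
  have y: "y \<in> V - {x}" using neighbour_of_x[OF xy] .
  define z where "z = s y"
  have z: "z \<in> V - {x}" "{y, z} \<in> F'" "s z \<noteq> y" "z \<noteq> y"
    using successor[OF y] unfolding z_def by auto
  let ?R = "{{y, z}}" and ?A = "{{x, y}, {x, z}}"
  have "two_factor V E ((F' - ?R) \<union> ?A)"
  proof (rule two_factor_switch[OF F' finite_F'])
    show "?R \<subseteq> F'" "?A \<subseteq> E" "finite ?A" using z(2) xy xz unfolding z_def by auto
    show "?A \<inter> F' \<subseteq> ?R" using F'_edges(2) by blast
    show "degree ?A x = 2" "\<forall>v\<in>V - {x}. degree ?A v = degree ?R v"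
      using y z(1,4) by (auto simp: degree_insert doubleton_eq_iff)
  qed
  then show False
  proof (rule switch_not_two_factor)
    show "{y} \<subseteq> V - {x}" "y \<in> {y}" "{x, y} \<in> (F' - ?R) \<union> ?A"
      "\<forall>t\<in>{y}. \<forall>t'\<in>{y}. reach ((F' - ?R) \<union> ?A) t t'"
      using y by auto
    have "{w, s w} \<noteq> {y, z}" if "w \<noteq> y" for w
      using that z(3) by (auto simp: doubleton_eq_iff)
    then show "\<forall>w\<in>V - {x} - {y}. {w, s w} \<in> (F' - ?R) \<union> ?A"
      using successor(2) by blast
  qed
qed

lemma successors_not_adjacent:
  assumes xy: "{x, y1} \<in> E" "{x, y2} \<in> E" "y1 \<noteq> y2"
  shows "{s y1, s y2} \<notin> E"
proof
  assume zz: "{s y1, s y2} \<in> E"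
  have y: "y1 \<in> V - {x}" "y2 \<in> V - {x}" using neighbour_of_x xy by blast+
  define z1 z2 where "z1 = s y1" and "z2 = s y2"
  have z: "z1 \<in> V - {x}" "{y1, z1} \<in> F'" "s z1 \<noteq> y1" "z1 \<noteq> y1"
    "z2 \<in> V - {x}" "{y2, z2} \<in> F'" "s z2 \<noteq> y2" "z2 \<noteq> y2"
    using successor[OF y(1)] successor[OF y(2)] unfolding z1_def z2_def by auto
  have "z1 \<noteq> z2" using inj_onD[OF inj_successor] y xy(3) unfolding z1_def z2_def by blast
  have not_swapped: "\<not> (z1 = y2 \<and> z2 = y1)" using z(7) unfolding z1_def by blast
  let ?R = "{{y1, z1}, {y2, z2}}" and ?A = "{{x, y1}, {x, y2}, {z1, z2}}"
  let ?F2 = "(F' - ?R) \<union> ?A"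
  have "two_factor V E ?F2"
  proof (rule two_factor_switch[OF F' finite_F'])
    show "?R \<subseteq> F'" "?A \<subseteq> E" "finite ?A" using z(2,6) xy zz unfolding z1_def z2_def by auto
    show "?A \<inter> F' \<subseteq> ?R"
    proof
      fix e assume e: "e \<in> ?A \<inter> F'"
      then have "e = {z1, z2}" using F'_edges(2) by blast
      then have "z1 = y2 \<or> z2 = y1"
        using adjacent_successors_in_F'[OF y] e unfolding z1_def z2_def by blast
      then show "e \<in> ?R" using \<open>e = {z1, z2}\<close> by (auto simp: insert_commute)
    qed
    show "degree ?A x = 2" "\<forall>v\<in>V - {x}. degree ?A v = degree ?R v"
      using y z(1,4,5,8) xy(3) \<open>z1 \<noteq> z2\<close> not_swapped
      by (auto simp: degree_insert doubleton_eq_iff)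
  qed
  then show False
  proof (rule switch_not_two_factor)
    show "{y1, y2} \<subseteq> V - {x}" "y1 \<in> {y1, y2}" "{x, y1} \<in> ?F2" using y by auto
    have "reach ?F2 y1 x" "reach ?F2 x y2" by (auto intro: reach_edge simp: insert_commute)
    then have "reach ?F2 y1 y2" by (rule reach_trans)
    then have "reach ?F2 y1 y2" "reach ?F2 y2 y1" by (auto intro: reach_sym)
    then show "\<forall>t\<in>{y1, y2}. \<forall>t'\<in>{y1, y2}. reach ?F2 t t'" by auto
    have "{w, s w} \<notin> ?R" if "w \<noteq> y1" "w \<noteq> y2" for w
      using that z(3,7) by (auto simp: doubleton_eq_iff)
    then show "\<forall>w\<in>V - {x} - {y1, y2}. {w, s w} \<in> ?F2"
      using successor(2) by blast
  qed
qed

lemma independent_successors: "independent V E (insert x (s ` neighbours E x))"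
  unfolding independent_def
proof (intro conjI ballI)
  show "insert x (s ` neighbours E x) \<subseteq> V"
    using x successor(1) neighbour_of_x unfolding neighbours_def by blast
next
  fix u v assume "u \<in> insert x (s ` neighbours E x)" "v \<in> insert x (s ` neighbours E x)"
  then consider "u = v" | y where "u = x" "v = s y" "{x, y} \<in> E" | y where "v = x" "u = s y" "{x, y} \<in> E"
    | y1 y2 where "u = s y1" "v = s y2" "{x, y1} \<in> E" "{x, y2} \<in> E" "y1 \<noteq> y2"
    unfolding neighbours_def by blast
  then show "{u, v} \<notin> E"
  proof cases
    case 1
    then show ?thesis using graph_on_no_loop[OF E_graph_on] by simp
  next
    case 2
    then show ?thesis using successor_not_adjacent by blast
  next
    case 3
    then show ?thesis using successor_not_adjacent by (simp add: insert_commute)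
  next
    case 4
    then show ?thesis using successors_not_adjacent by blast
  qed
qed

lemma degree_less_alpha: "degree E x < alpha V E"
proof -
  let ?N = "neighbours E x"
  have N: "?N \<subseteq> V - {x}" using neighbour_of_x unfolding neighbours_def by blast
  then have "x \<notin> s ` ?N" using successor(1) by blast
  moreover have "inj_on s ?N" using inj_successor N by (rule inj_on_subset)
  moreover have "finite ?N" using finite_V_minus_x N by (rule finite_subset[rotated])
  ultimately have "card (insert x (s ` ?N)) = Suc (card ?N)" by (simp add: card_image)
  moreover have "degree E x = card ?N" by (rule degree_eq_card_neighbours[OF E_graph_on])
  moreover have "card (insert x (s ` ?N)) \<le> alpha V E"
    using card_le_alpha independent_successors graph unfolding simple_graph_def by blast
  ultimately show ?thesis by simp
qed

end

theorem lemma11: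
  fixes V :: "'a set" and E F F' :: "'a set set" and x :: 'a
  assumes "simple_graph V E"
    and "two_factor V E F"
    and "\<forall>F2. two_factor V E F2 \<longrightarrow> num_components V F \<le> num_components V F2"
    and "x \<in> V"
    and "two_factor (V - {x}) (del_edges E x) F'"
    and "num_components (V - {x}) F' < num_components V F"
  shows "int (degree E x) \<le> int (alpha V E) - 1"
proof -
  have "graph_on (V - {x}) F'" "finite (V - {x})"
    using assms(1,5) graph_on_two_factor_del unfolding simple_graph_iff by auto
  then obtain s where s: "orientation (V - {x}) F' s"
    using orientation_exists two_factor_two_regular assms(5) by metis
  have "\<forall>F2. two_factor V E F2 \<longrightarrow> num_components (V - {x}) F' < num_components V F2"
    using assms(3,6) by (meson less_le_trans)
  then have "degree E x < alpha V E"
    by (rule degree_less_alpha[OF assms(1,4,5) s])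
  then show ?thesis by simp
qed

end
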